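(* Let $\mathcal C$ be a $k$-coloured operad (in the sense of the context). Then the enveloping operad $\mathrm{Env}(\mathcal C)$ is isomorphic to the operad $\mathrm{AC}(\mathcal C^+)$ of anticoloured syntax trees on $\mathcal C^+$. (Under the isomorphism, each $\equiv$-class of syntax trees on $\bar{\mathcal C}$ is sent to the unique anticoloured syntax tree it contains.)
   Context: All operads are nonsymmetric operads in the category of sets. Fix $k\ge 1$ and write $[k]=\{1,\dots,k\}$. A $k$-coloured operad $\mathcal C=\biguplus_{n\ge1}\mathcal C(n)$ assigns to each $x\in\mathcal C(n)$ an output colour $\mathrm{Out}(x)\in[k]$ and input colours $\mathrm{In}_1(x),\dots,\mathrm{In}_n(x)\in[k]$. It has partial compositions $x\circ_i y\in\mathcal C(n+m-1)$, for $x\in\mathcal C(n)$, $y\in\mathcal C(m)$ and $i\in[n]$, which are defined exactly when $\mathrm{Out}(y)=\mathrm{In}_i(x)$. The composite has output colour $\mathrm{Out}(x)$ and input colours $\mathrm{In}_1(x),\dots,\mathrm{In}_{i-1}(x),\mathrm{In}_1(y),\dots,\mathrm{In}_m(y),\mathrm{In}_{i+1}(x),\dots,\mathrm{In}_n(x)$. These compositions satisfy the usual associativity and unit axioms of coloured operads. It is assumed that $\mathcal C(1)=\{\mathbf 1_c : c\in[k]\}$, where $\mathbf 1_c$ is a unit with output and input colour $c$, and that each $\mathcal C(n)$ is finite. An (uncoloured) operad is a $1$-coloured operad. Let $\mathcal C^+=\mathcal C\setminus\mathcal C(1)$, and let $\bar{\mathcal C}$ be the same graded set with all colours forgotten, i.e.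 all colours set to $1$. The enveloping operad $\mathrm{Env}(\mathcal C)$ is the quotient of the free uncoloured operad on $\bar{\mathcal C}$ (whose elements are planar rooted syntax trees with nodes of arity $\ell$ labelled by elements of $\mathcal C(\ell)$, composed by grafting) by the smallest operadic congruence $\equiv$ such that $\mathfrak c(x)\circ_i\mathfrak c(y)\equiv\mathfrak c(x\circ_i y)$ for all $x,y\in\mathcal C^+$ with $x\circ_i y$ defined in $\mathcal C$. Here $\mathfrak c(x)$ denotes the corolla, i.e. the tree with a single internal node labelled $x$. An anticoloured syntax tree on $\mathcal C^+$ is a planar rooted tree whose internal nodes of arity $\ell$ are labelled by elements of $\mathcal C(\ell)$, $\ell\ge2$, such that whenever an internal node $s$ labelled $y$ is the $i$th child of an internal node $r$ labelled $x$, one has $\mathrm{In}_i(x)\ne\mathrm{Out}(y)$. The set $\mathrm{AC}(\mathcal C^+)$ of such trees, with the one-leaf tree as unit, is an operad with the following composition. For trees $S,T$ and a leaf index $i$ of $S$, let $r$ be the parent node of the $i$th leaf of $S$, let that leaf be the $j$th child of $r$, and let $s$ be the root of $T$. Then $S\circ_i T$ is obtained by grafting the root of $T$ on the $i$th leaf of $S$. If moreover $\mathrm{Out}(T)=\mathrm{In}_j(r)$, one then replaces the two nodes $r$ (label $x$) and $s$ (label $y$) by a single node labelled $x\circ_j y$. *)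

theory Defs
  imports Main
begin

record 'a col_operad =
  elems :: "'a set"                    (* the graded set C, all arities together *)
  arity :: "'a \<Rightarrow> nat"
  outc  :: "'a \<Rightarrow> nat"
  inc   :: "'a \<Rightarrow> nat \<Rightarrow> nat"         (* inc C x i = In_i(x), i in {1..arity x} *)
  pcomp :: "'a \<Rightarrow> nat \<Rightarrow> 'a \<Rightarrow> 'a"    (* pcomp C x i y = x o_i y (meaningful when defined) *)
  unit  :: "nat \<Rightarrow> 'a"

definition coloured_operad :: "nat \<Rightarrow> 'a col_operad \<Rightarrow> bool" where
  "coloured_operad k C \<longleftrightarrow>
     k \<ge> 1 \<and>
     \<comment> \<open>grading and colours\<close>
     (\<forall>x\<in>elems C. arity C x \<ge> 1 \<and> outc C x \<in> {1..k} \<and>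
                   (\<forall>i\<in>{1..arity C x}. inc C x i \<in> {1..k})) \<and>
     \<comment> \<open>partial composition, defined when Out(y) = In_i(x)\<close>
     (\<forall>x\<in>elems C. \<forall>y\<in>elems C. \<forall>i\<in>{1..arity C x}. outc C y = inc C x i \<longrightarrow>
        pcomp C x i y \<in> elems C \<and>
        arity C (pcomp C x i y) = arity C x + arity C y - 1 \<and>
        outc C (pcomp C x i y) = outc C x \<and>
        (\<forall>p\<in>{1..arity C x + arity C y - 1}.
           inc C (pcomp C x i y) p =
             (if p < i then inc C x p
              else if p < i + arity C y then inc C y (p - i + 1)
              else inc C x (p - arity C y + 1)))) \<and>
     \<comment> \<open>sequential associativity\<close>
     (\<forall>x\<in>elems C. \<forall>y\<in>elems C. \<forall>z\<in>elems C. \<forall>i\<in>{1..arity C x}. \<forall>j\<in>{1..arity C y}.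
        outc C y = inc C x i \<longrightarrow> outc C z = inc C y j \<longrightarrow>
        pcomp C x i (pcomp C y j z) = pcomp C (pcomp C x i y) (i + j - 1) z) \<and>
     \<comment> \<open>parallel associativity\<close>
     (\<forall>x\<in>elems C. \<forall>y\<in>elems C. \<forall>z\<in>elems C. \<forall>i j. 1 \<le> i \<longrightarrow> i < j \<longrightarrow> j \<le> arity C x \<longrightarrow>
        outc C y = inc C x i \<longrightarrow> outc C z = inc C x j \<longrightarrow>
        pcomp C (pcomp C x i y) (j + arity C y - 1) z = pcomp C (pcomp C x j z) i y) \<and>
     \<comment> \<open>units\<close>
     (\<forall>c\<in>{1..k}. unit C c \<in> elems C \<and> arity C (unit C c) = 1 \<and>
                  outc C (unit C c) = c \<and> inc C (unit C c) 1 = c) \<and>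
     (\<forall>x\<in>elems C. pcomp C (unit C (outc C x)) 1 x = x) \<and>
     (\<forall>x\<in>elems C. \<forall>i\<in>{1..arity C x}. pcomp C x i (unit C (inc C x i)) = x) \<and>
     \<comment> \<open>C(1) consists exactly of the units, and each C(n) is finite\<close>
     {x\<in>elems C. arity C x = 1} = unit C ` {1..k} \<and>
     (\<forall>n. finite {x\<in>elems C. arity C x = n})"

datatype 'a tree = Leaf | Node 'a "'a tree list"

fun nlv :: "'a tree \<Rightarrow> nat" where
  "nlv Leaf = 1"
| "nlv (Node x ts) = sum_list (map nlv ts)"

text \<open>Syntax trees on the uncoloured set of elements of arity at least 2 (C^+).\<close>
fun stree :: "'a col_operad \<Rightarrow> 'a tree \<Rightarrow> bool" where
  "stree C Leaf = True"
| "stree C (Node x ts) \<longleftrightarrow> x \<in> elems C \<and> arity C x \<ge> 2 \<and> length ts = arity C x \<and>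
                            (\<forall>t\<in>set ts. stree C t)"

text \<open>Grafting (composition in the free operad): the root of T is grafted on
  the i-th leaf (leaves numbered from 1, left to right) of S.\<close>
fun graft :: "'a tree \<Rightarrow> nat \<Rightarrow> 'a tree \<Rightarrow> 'a tree"
and graft_list :: "'a tree list \<Rightarrow> nat \<Rightarrow> 'a tree \<Rightarrow> 'a tree list" where
  "graft Leaf i T = (if i = 1 then T else Leaf)"
| "graft (Node x ts) i T = Node x (graft_list ts i T)"
| "graft_list [] i T = []"
| "graft_list (t # ts) i T =
     (if i \<le> nlv t then graft t i T # ts else t # graft_list ts (i - nlv t) T)"

definition corolla :: "'a col_operad \<Rightarrow> 'a \<Rightarrow> 'a tree" where
  "corolla C x = Node x (replicate (arity C x) Leaf)"

inductive env_eq :: "'a col_operad \<Rightarrow> 'a tree \<Rightarrow> 'a tree \<Rightarrow> bool" for C where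
  gen: "\<lbrakk>x \<in> elems C; arity C x \<ge> 2; y \<in> elems C; arity C y \<ge> 2; i \<in> {1..arity C x};
         outc C y = inc C x i\<rbrakk>
        \<Longrightarrow> env_eq C (graft (corolla C x) i (corolla C y)) (corolla C (pcomp C x i y))"
| refl: "stree C S \<Longrightarrow> env_eq C S S"
| sym: "env_eq C S T \<Longrightarrow> env_eq C T S"
| trans: "env_eq C S T \<Longrightarrow> env_eq C T U \<Longrightarrow> env_eq C S U"
| cong: "env_eq C S S' \<Longrightarrow> env_eq C T T' \<Longrightarrow> i \<in> {1..nlv S}
         \<Longrightarrow> env_eq C (graft S i T) (graft S' i T')"

definition env_class :: "'a col_operad \<Rightarrow> 'a tree \<Rightarrow> 'a tree set" where
  "env_class C S = {T. env_eq C S T}"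

definition Env :: "'a col_operad \<Rightarrow> 'a tree set set" where
  "Env C = env_class C ` {S. stree C S}"

fun anticol :: "'a col_operad \<Rightarrow> 'a tree \<Rightarrow> bool" where
  "anticol C Leaf = True"
| "anticol C (Node x ts) \<longleftrightarrow> x \<in> elems C \<and> arity C x \<ge> 2 \<and> length ts = arity C x \<and>
     (\<forall>t\<in>set ts. anticol C t) \<and>
     (\<forall>j < length ts. \<forall>y us. ts ! j = Node y us \<longrightarrow> inc C x (j + 1) \<noteq> outc C y)"

definition AC :: "'a col_operad \<Rightarrow> 'a tree set" where
  "AC C = {T. anticol C T}"

text \<open>Composition in AC(C^+): graft T on the i-th leaf of S; if that leaf is the
  j-th child of a node r labelled x and T has root label y with Out(y) = In_j(x),
  merge r and the root of T into a node labelled x o_j y.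
  The helper ac_comp_list C x j pre ts i T processes the children ts of a node
  labelled x, j being the position of the first child of ts and pre the already
  processed children.\<close>
fun ac_comp :: "'a col_operad \<Rightarrow> 'a tree \<Rightarrow> nat \<Rightarrow> 'a tree \<Rightarrow> 'a tree"
and ac_comp_list :: "'a col_operad \<Rightarrow> 'a \<Rightarrow> nat \<Rightarrow> 'a tree list \<Rightarrow> 'a tree list
                      \<Rightarrow> nat \<Rightarrow> 'a tree \<Rightarrow> 'a tree" where
  "ac_comp C Leaf i T = (if i = 1 then T else Leaf)"
| "ac_comp C (Node x ts) i T = ac_comp_list C x 1 [] ts i T"
| "ac_comp_list C x j pre [] i T = Node x pre"
| "ac_comp_list C x j pre (t # ts) i T =
     (if i \<le> nlv t then
        (case t of
           Leaf \<Rightarrow> (case T of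
                      Leaf \<Rightarrow> Node x (pre @ Leaf # ts)
                    | Node y us \<Rightarrow>
                        (if outc C y = inc C x j
                         then Node (pcomp C x j y) (pre @ us @ ts)
                         else Node x (pre @ T # ts)))
         | Node _ _ \<Rightarrow> Node x (pre @ ac_comp C t i T # ts))
      else ac_comp_list C x (j + 1) (pre @ [t]) ts (i - nlv t) T)"

end

(*
  Contracting an edge whose colours match, i.e. replacing a node x with j-th child y
  (Out(y) = In_j(x)) by a single node x \<circ>_j y, is a rewriting system on syntax trees which
  strictly decreases the number of nodes. Its critical pairs are closed by the sequential and
  parallel associativity of C, so by Newman's lemma every tree has a unique normal form. The
  normal forms are exactly the anticoloured trees, and the congruence defining Env(C) is the
  equivalence generated by contraction. Hence every class contains exactly one anticoloured
  tree, its normal form, and grafting two normal forms reduces to their composite in AC(C^+).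
*)

theory Submission
  imports Defs
begin

abbreviation nlvs :: "'a tree list \<Rightarrow> nat" where
  "nlvs ts \<equiv> sum_list (map nlv ts)"

lemma graft_list_append_after:
  "1 \<le> q \<Longrightarrow> graft_list (pre @ rest) (nlvs pre + q) T = pre @ graft_list rest q T"
  by (induction pre) auto

lemma graft_list_append_before:
  "1 \<le> i \<Longrightarrow> i \<le> nlvs pre \<Longrightarrow> graft_list (pre @ rest) i T = graft_list pre i T @ rest"
  by (induction pre arbitrary: i) auto

lemma length_graft_list [simp]: "length (graft_list ts i T) = length ts"
  by (induction ts arbitrary: i) auto

lemma nlv_graft: "1 \<le> i \<Longrightarrow> i \<le> nlv S \<Longrightarrow> nlv (graft S i T) = nlv S + nlv T - 1"
  and nlvs_graft_list: "1 \<le> i \<Longrightarrow> i \<le> nlvs ts \<Longrightarrow> nlvs (graft_list ts i T) = nlvs ts + nlv T - 1"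
  by (induction S i T and ts i T rule: graft_graft_list.induct) auto

lemma nlvs_replicate_Leaf [simp]: "nlvs (replicate n Leaf) = n"
  by (induction n) auto

lemma replicate_Suc_add: "replicate (Suc (a + b)) z = replicate a z @ z # replicate b z"
  by (induction a) auto

lemma leaf_index_decompose:
  assumes "1 \<le> i" "i \<le> nlvs ts"
  shows "\<exists>pre t post q. ts = pre @ t # post \<and> i = nlvs pre + q \<and> 1 \<le> q \<and> q \<le> nlv t"
  using assms
proof (induction ts arbitrary: i)
  case (Cons t ts)
  show ?case
  proof (cases "i \<le> nlv t")
    case True
    then show ?thesis using Cons.prems by (intro exI[of _ "[]"]) auto
  next
    case False
    then have "\<exists>pre u post q. ts = pre @ u # post \<and> i - nlv t = nlvs pre + q \<and> 1 \<le> q \<and> q \<le> nlv u"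
      using Cons by auto
    then obtain pre u post q where "ts = pre @ u # post" "i - nlv t = nlvs pre + q" "1 \<le> q" "q \<le> nlv u"
      by blast
    with False show ?thesis by (intro exI[of _ "t # pre"] exI[of _ u] exI[of _ post] exI[of _ q]) auto
  qed
qed simp

lemma leaf_index_cases:
  fixes i a b :: nat
  obtains "i \<le> a" | q where "i = a + q" "1 \<le> q" "q \<le> b" | q where "i = a + b + q" "1 \<le> q"
proof -
  have "i \<le> a \<or> (\<exists>q. i = a + q \<and> 1 \<le> q \<and> q \<le> b) \<or> (\<exists>q. i = a + b + q \<and> 1 \<le> q)"
    by presburger
  then show ?thesis using that by blast
qed

lemma graft_Node_child:
  "ts = pre @ t # post \<Longrightarrow> i = nlvs pre + q \<Longrightarrow> 1 \<le> q \<Longrightarrow> q \<le> nlv t \<Longrightarrow>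
   graft (Node x ts) i T = Node x (pre @ graft t q T # post)"
  by (simp add: graft_list_append_after)

lemma graft_Node_Leaf_child:
  "graft (Node x (pre @ Leaf # post)) (Suc (nlvs pre)) T = Node x (pre @ T # post)"
  using graft_Node_child[of "pre @ Leaf # post" pre Leaf post "Suc (nlvs pre)" 1 x T] by simp

lemma stree_graft:
  assumes "stree C S" "stree C T" "1 \<le> i" "i \<le> nlv S"
  shows "stree C (graft S i T)"
  using assms
proof (induction S arbitrary: i)
  case (Node x ts)
  obtain pre t post q where d: "ts = pre @ t # post" "i = nlvs pre + q" "1 \<le> q" "q \<le> nlv t"
    using leaf_index_decompose[of i ts] Node.prems by auto
  have "stree C (graft t q T)" using Node d by auto
  moreover have "graft (Node x ts) i T = Node x (pre @ graft t q T # post)"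
    by (rule graft_Node_child[OF d])
  ultimately show ?case using Node.prems d by auto
qed simp

fun node_count :: "'a tree \<Rightarrow> nat" where
  "node_count Leaf = 0"
| "node_count (Node x ts) = Suc (sum_list (map node_count ts))"

lemma append_Cons_eq_append_Cons_cases:
  assumes "a @ x # b = c @ y # d"
  obtains "a = c" "x = y" "b = d"
  | m where "c = a @ x # m" "b = m @ y # d"
  | m where "a = c @ y # m" "d = m @ x # b"
proof -
  have "(a = c \<and> x = y \<and> b = d) \<or> (\<exists>m. c = a @ x # m \<and> b = m @ y # d) \<or>
        (\<exists>m. a = c @ y # m \<and> d = m @ x # b)"
    using assms
  proof (induction a arbitrary: c)
    case Nil then show ?case by (cases c) auto
  next
    case (Cons u a) then show ?case by (cases c) auto
  qed
  then show ?thesis using that by blast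
qed

lemma anticol_stree: "anticol C S \<Longrightarrow> stree C S"
  by (induction S) auto

lemma anticol_Node_colourD:
  "anticol C (Node x ts) \<Longrightarrow> j < length ts \<Longrightarrow> ts ! j = Node y us \<Longrightarrow> inc C x (Suc j) \<noteq> outc C y"
  unfolding anticol.simps by (metis Suc_eq_plus1)

fun anticol_children :: "'a col_operad \<Rightarrow> 'a \<Rightarrow> nat \<Rightarrow> 'a tree list \<Rightarrow> bool" where
  "anticol_children C x j [] = True"
| "anticol_children C x j (t # ts) \<longleftrightarrow> anticol C t \<and> (\<forall>y us. t = Node y us \<longrightarrow> inc C x j \<noteq> outc C y) \<and>
     anticol_children C x (Suc j) ts"

lemma anticol_children_nth:
  "anticol_children C x j ts \<longleftrightarrow>
   (\<forall>k<length ts. anticol C (ts ! k) \<and> (\<forall>y us. ts ! k = Node y us \<longrightarrow> inc C x (j + k) \<noteq> outc C y))"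
  by (induction ts arbitrary: j) (auto simp: All_less_Suc2)

lemma anticol_Node_iff:
  "anticol C (Node x ts) \<longleftrightarrow>
   x \<in> elems C \<and> 2 \<le> arity C x \<and> length ts = arity C x \<and> anticol_children C x 1 ts"
  unfolding anticol_children_nth by (auto simp: all_set_conv_all_nth)

lemma anticol_children_append:
  "anticol_children C x j (a @ b) \<longleftrightarrow> anticol_children C x j a \<and> anticol_children C x (j + length a) b"
  by (induction a arbitrary: j) auto

lemma anticol_children_cong:
  "(\<And>k. k < length ts \<Longrightarrow> inc C x (j + k) = inc C x' (j' + k)) \<Longrightarrow>
   anticol_children C x j ts = anticol_children C x' j' ts"
  unfolding anticol_children_nth by auto

lemma ac_comp_list_skip:
  "1 \<le> q \<Longrightarrow> ac_comp_list C x (Suc (length pre)) pre (p @ rest) (nlvs p + q) T =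
     ac_comp_list C x (Suc (length (pre @ p))) (pre @ p) rest q T"
proof (induction p arbitrary: pre)
  case (Cons a p)
  then show ?case using Cons.IH[of "pre @ [a]"] by simp
qed simp

lemma env_class_eqI: "env_eq C S T \<Longrightarrow> env_class C S = env_class C T"
  unfolding env_class_def by (blast intro: env_eq.sym env_eq.trans)

lemma env_eq_fill_Leaf_child:
  assumes "env_eq C (Node x (a @ Leaf # b)) (Node x' (a' @ Leaf # b'))" "nlvs a = nlvs a'" "stree C t"
  shows "env_eq C (Node x (a @ t # b)) (Node x' (a' @ t # b'))"
  using env_eq.cong[OF assms(1) env_eq.refl[OF assms(3)], of "Suc (nlvs a)"] assms(2)
    graft_Node_Leaf_child[of x a b t] graft_Node_Leaf_child[of x' a' b' t] by simp

lemma env_eq_fill_Leaf_grandchild: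
  assumes "env_eq C (Node x (p @ Node y (a @ Leaf # b) # q)) (Node x' (a' @ Leaf # b'))"
    "nlvs p + nlvs a = nlvs a'" "stree C t"
  shows "env_eq C (Node x (p @ Node y (a @ t # b) # q)) (Node x' (a' @ t # b'))"
proof -
  have "graft (Node x (p @ Node y (a @ Leaf # b) # q)) (nlvs p + Suc (nlvs a)) t
      = Node x (p @ Node y (a @ t # b) # q)"
    using graft_Node_child[of _ p "Node y (a @ Leaf # b)" q _ "Suc (nlvs a)"]
      graft_Node_Leaf_child[of y a b t] by simp
  moreover have "graft (Node x' (a' @ Leaf # b')) (nlvs p + Suc (nlvs a)) t = Node x' (a' @ t # b')"
    using assms(2) graft_Node_Leaf_child[of x' a' b' t] by simp
  ultimately show ?thesis
    using env_eq.cong[OF assms(1) env_eq.refl[OF assms(3)], of "nlvs p + Suc (nlvs a)"] by simp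
qed

section \<open>Newman's lemma\<close>

locale newman =
  fixes r :: "'b \<Rightarrow> 'b \<Rightarrow> bool" and weight :: "'b \<Rightarrow> nat"
  assumes weight_decreasing: "r x y \<Longrightarrow> weight y < weight x"
    and locally_confluent: "r x y \<Longrightarrow> r x z \<Longrightarrow> \<exists>u. r\<^sup>*\<^sup>* y u \<and> r\<^sup>*\<^sup>* z u"

begin

definition normal :: "'b \<Rightarrow> bool" where
  "normal x \<longleftrightarrow> (\<nexists>y. r x y)"

lemma normal_form_exists: "\<exists>n. r\<^sup>*\<^sup>* x n \<and> normal n"
proof (induction "weight x" arbitrary: x rule: less_induct)
  case less
  show ?case
  proof (cases "normal x")
    case False
    then obtain y where "r x y" unfolding normal_def by blast
    moreover obtain n where "r\<^sup>*\<^sup>* y n" "normal n" using less weight_decreasing[OF \<open>r x y\<close>] by blast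
    ultimately show ?thesis by (meson converse_rtranclp_into_rtranclp)
  qed blast
qed

lemma normal_form_unique:
  "r\<^sup>*\<^sup>* x n1 \<Longrightarrow> normal n1 \<Longrightarrow> r\<^sup>*\<^sup>* x n2 \<Longrightarrow> normal n2 \<Longrightarrow> n1 = n2"
proof (induction "weight x" arbitrary: x n1 n2 rule: less_induct)
  case less
  show ?case
  proof (cases "x = n1 \<or> x = n2")
    case True
    then have "normal x" using less.prems by blast
    then have "x = n1" "x = n2" using less.prems(1,3) unfolding normal_def
      by (auto elim: converse_rtranclpE)
    then show ?thesis by simp
  next
    case False
    obtain y1 where y1: "r x y1" "r\<^sup>*\<^sup>* y1 n1"
      using less.prems(1) False by (auto elim: converse_rtranclpE)
    obtain y2 where y2: "r x y2" "r\<^sup>*\<^sup>* y2 n2"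
      using less.prems(3) False by (auto elim: converse_rtranclpE)
    obtain u where u: "r\<^sup>*\<^sup>* y1 u" "r\<^sup>*\<^sup>* y2 u" using locally_confluent[OF y1(1) y2(1)] by blast
    obtain n where n: "r\<^sup>*\<^sup>* u n" "normal n" using normal_form_exists by blast
    have "n1 = n" using less(1)[OF weight_decreasing[OF y1(1)] y1(2) less.prems(2)] u(1) n
      by (meson rtranclp_trans)
    moreover have "n2 = n" using less(1)[OF weight_decreasing[OF y2(1)] y2(2) less.prems(4)] u(2) n
      by (meson rtranclp_trans)
    ultimately show ?thesis by simp
  qed
qed

definition nf :: "'b \<Rightarrow> 'b" where
  "nf x = (SOME n. r\<^sup>*\<^sup>* x n \<and> normal n)"

lemma rtranclp_nf: "r\<^sup>*\<^sup>* x (nf x)" and normal_nf: "normal (nf x)"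
  using someI_ex[OF normal_form_exists] unfolding nf_def by blast+

lemma nf_eqI: "r\<^sup>*\<^sup>* x n \<Longrightarrow> normal n \<Longrightarrow> nf x = n"
  using normal_form_unique rtranclp_nf normal_nf by blast

lemma nf_normal: "normal x \<Longrightarrow> nf x = x"
  by (simp add: nf_eqI)

lemma nf_rtranclp_eq: "r\<^sup>*\<^sup>* x y \<Longrightarrow> nf x = nf y"
  using nf_eqI rtranclp_nf normal_nf rtranclp_trans by metis

end

section \<open>Edge contraction\<close>

inductive contract :: "'a col_operad \<Rightarrow> 'a tree \<Rightarrow> 'a tree \<Rightarrow> bool" for C where
  root: "stree C (Node x (pre @ Node y vs # post)) \<Longrightarrow> outc C y = inc C x (Suc (length pre)) \<Longrightarrow>
     contract C (Node x (pre @ Node y vs # post))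
       (Node (pcomp C x (Suc (length pre)) y) (pre @ vs @ post))"
| child: "stree C (Node x (pre @ t # post)) \<Longrightarrow> contract C t t' \<Longrightarrow>
     contract C (Node x (pre @ t # post)) (Node x (pre @ t' # post))"

lemma contract_rootI:
  "S = Node x (pre @ Node y vs # post) \<Longrightarrow> stree C S \<Longrightarrow> outc C y = inc C x (Suc (length pre)) \<Longrightarrow>
   T = Node (pcomp C x (Suc (length pre)) y) (pre @ vs @ post) \<Longrightarrow> contract C S T"
  using contract.root[of C x pre y vs post] by simp

lemma contract_childI:
  "S = Node x (pre @ t # post) \<Longrightarrow> stree C S \<Longrightarrow> contract C t t' \<Longrightarrow>
   T = Node x (pre @ t' # post) \<Longrightarrow> contract C S T"
  using contract.child[of C x pre t post t'] by simp

lemma contract_node_count: "contract C S T \<Longrightarrow> node_count T < node_count S"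
  by (induction rule: contract.induct) auto

locale colop =
  fixes k :: nat and C :: "'a col_operad"
  assumes coloured_operad: "coloured_operad k C"

begin

lemma
  assumes "x \<in> elems C" "y \<in> elems C" "i \<in> {1..arity C x}" "outc C y = inc C x i"
  shows pcomp_elems: "pcomp C x i y \<in> elems C"
    and arity_pcomp: "arity C (pcomp C x i y) = arity C x + arity C y - 1"
    and outc_pcomp: "outc C (pcomp C x i y) = outc C x"
    and inc_pcomp: "p \<in> {1..arity C x + arity C y - 1} \<Longrightarrow> inc C (pcomp C x i y) p =
       (if p < i then inc C x p else if p < i + arity C y then inc C y (p - i + 1)
        else inc C x (p - arity C y + 1))"
  using coloured_operad[unfolded coloured_operad_def, THEN conjunct2, THEN conjunct2, THEN conjunct1]
    assms by meson+

lemma pcomp_assoc_seq: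
  assumes "x \<in> elems C" "y \<in> elems C" "z \<in> elems C" "i \<in> {1..arity C x}" "j \<in> {1..arity C y}"
    "outc C y = inc C x i" "outc C z = inc C y j"
  shows "pcomp C x i (pcomp C y j z) = pcomp C (pcomp C x i y) (i + j - 1) z"
  using coloured_operad[unfolded coloured_operad_def, THEN conjunct2, THEN conjunct2, THEN conjunct2,
      THEN conjunct1] assms by meson

lemma pcomp_assoc_par:
  assumes "x \<in> elems C" "y \<in> elems C" "z \<in> elems C" "1 \<le> i" "i < j" "j \<le> arity C x"
    "outc C y = inc C x i" "outc C z = inc C x j"
  shows "pcomp C (pcomp C x i y) (j + arity C y - 1) z = pcomp C (pcomp C x j z) i y"
  using coloured_operad[unfolded coloured_operad_def, THEN conjunct2, THEN conjunct2, THEN conjunct2,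
      THEN conjunct2, THEN conjunct1] assms by meson

lemma contract_stree: "contract C S T \<Longrightarrow> stree C S \<and> stree C T \<and> nlv T = nlv S"
proof (induction rule: contract.induct)
  case (root x pre y vs post)
  then have "x \<in> elems C" "y \<in> elems C" "arity C x = Suc (length pre + length post)"
    "arity C y = length vs" "2 \<le> arity C y"
    by auto
  then have "pcomp C x (Suc (length pre)) y \<in> elems C"
    "arity C (pcomp C x (Suc (length pre)) y) = arity C x + arity C y - 1"
    using pcomp_elems arity_pcomp root(2) by auto
  then show ?case using root(1) by auto
qed auto

lemma rtranclp_contract_stree:
  "(contract C)\<^sup>*\<^sup>* S S' \<Longrightarrow> stree C S \<Longrightarrow> stree C S' \<and> nlv S' = nlv S"
  by (induction rule: rtranclp_induct) (auto dest: contract_stree)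

lemma rtranclp_contract_child:
  assumes "(contract C)\<^sup>*\<^sup>* t u" "stree C (Node x (p @ t # q))"
  shows "(contract C)\<^sup>*\<^sup>* (Node x (p @ t # q)) (Node x (p @ u # q))"
  using assms
proof (induction rule: rtranclp_induct)
  case (step u u')
  then have "stree C (Node x (p @ u # q))"
    using rtranclp_contract_stree[OF step.IH[OF step.prems] step.prems] by simp
  then show ?case using step by (meson contract.child rtranclp.rtrancl_into_rtrancl)
qed simp

subsection \<open>Local confluence\<close>

lemma contract_parallel_roots_join:
  assumes st: "stree C (Node x (p @ Node y1 v1 # m @ Node y2 v2 # q))"
    and m1: "outc C y1 = inc C x (Suc (length p))"
    and m2: "outc C y2 = inc C x (Suc (Suc (length p + length m)))"
  shows "\<exists>U. contract C (Node (pcomp C x (Suc (length p)) y1) (p @ v1 @ m @ Node y2 v2 # q)) U \<and>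
             contract C (Node (pcomp C x (Suc (Suc (length p + length m))) y2)
               (p @ Node y1 v1 # m @ v2 @ q)) U"
proof -
  let ?j1 = "Suc (length p)" and ?j2 = "Suc (Suc (length p + length m))"
  have s: "x \<in> elems C" "y1 \<in> elems C" "y2 \<in> elems C" "arity C x = length p + length m + length q + 2"
    "arity C y1 = length v1"
    using st by auto
  have st1: "stree C (Node (pcomp C x ?j1 y1) (p @ v1 @ m @ Node y2 v2 # q))"
    using contract_stree[OF contract.root[OF st m1]] by simp
  have "contract C (Node x (p @ Node y1 v1 # m @ Node y2 v2 # q))
      (Node (pcomp C x ?j2 y2) (p @ Node y1 v1 # m @ v2 @ q))"
    by (rule contract_rootI[where pre="p @ Node y1 v1 # m" and y=y2 and vs=v2 and post=q])
      (use st m2 in simp_all)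
  then have st2: "stree C (Node (pcomp C x ?j2 y2) (p @ Node y1 v1 # m @ v2 @ q))"
    using contract_stree by blast
  have i1: "inc C (pcomp C x ?j1 y1) (Suc (length (p @ v1 @ m))) = inc C x ?j2"
    using inc_pcomp[of x y1 ?j1 "Suc (length (p @ v1 @ m))"] s m1 by simp
  have i2: "inc C (pcomp C x ?j2 y2) ?j1 = inc C x ?j1"
    using inc_pcomp[of x y2 ?j2 ?j1] s m2 by simp
  have par: "pcomp C (pcomp C x ?j1 y1) (?j2 + arity C y1 - 1) y2 = pcomp C (pcomp C x ?j2 y2) ?j1 y1"
    using pcomp_assoc_par[of x y1 y2 ?j1 ?j2] s m1 m2 by simp
  let ?U = "Node (pcomp C (pcomp C x ?j1 y1) (?j2 + arity C y1 - 1) y2) (p @ v1 @ m @ v2 @ q)"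
  have "contract C (Node (pcomp C x ?j1 y1) (p @ v1 @ m @ Node y2 v2 # q)) ?U"
    by (rule contract_rootI[where pre="p @ v1 @ m" and y=y2 and vs=v2 and post=q])
      (use st1 i1 m2 s in \<open>simp_all add: ac_simps\<close>)
  moreover have "contract C (Node (pcomp C x ?j2 y2) (p @ Node y1 v1 # m @ v2 @ q)) ?U"
    by (rule contract_rootI[where pre=p and y=y1 and vs=v1 and post="m @ v2 @ q"])
      (use st2 i2 m1 par in simp_all)
  ultimately show ?thesis by blast
qed

lemma contract_nested_roots_join:
  assumes st: "stree C (Node x (p @ Node y (p' @ Node z ws # q') # q))"
    and m1: "outc C y = inc C x (Suc (length p))"
    and m2: "outc C z = inc C y (Suc (length p'))"
  shows "\<exists>U. contract C (Node (pcomp C x (Suc (length p)) y) (p @ (p' @ Node z ws # q') @ q)) U \<and>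
             contract C (Node x (p @ Node (pcomp C y (Suc (length p')) z) (p' @ ws @ q') # q)) U"
proof -
  let ?j = "Suc (length p)" and ?j' = "Suc (length p')"
  have s: "x \<in> elems C" "y \<in> elems C" "z \<in> elems C" "arity C x = Suc (length p + length q)"
    "arity C y = Suc (length p' + length q')"
    using st by auto
  have S1: "contract C (Node x (p @ Node y (p' @ Node z ws # q') # q))
      (Node (pcomp C x ?j y) (p @ (p' @ Node z ws # q') @ q))"
    by (rule contract.root[OF st m1])
  have S2: "contract C (Node x (p @ Node y (p' @ Node z ws # q') # q))
      (Node x (p @ Node (pcomp C y ?j' z) (p' @ ws @ q') # q))"
    by (rule contract.child[OF st]) (rule contract_rootI[OF HOL.refl _ m2 HOL.refl], use st in auto)
  have i1: "inc C (pcomp C x ?j y) (Suc (length (p @ p'))) = inc C y ?j'"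
    using inc_pcomp[of x y ?j "Suc (length (p @ p'))"] s m1 by simp
  have seq: "pcomp C x ?j (pcomp C y ?j' z) = pcomp C (pcomp C x ?j y) (?j + ?j' - 1) z"
    using pcomp_assoc_seq[of x y z ?j ?j'] s m1 m2 by simp
  have o: "outc C (pcomp C y ?j' z) = outc C y"
    using outc_pcomp[of y z ?j'] s m2 by simp
  let ?U = "Node (pcomp C x ?j (pcomp C y ?j' z)) (p @ p' @ ws @ q' @ q)"
  have "contract C (Node (pcomp C x ?j y) (p @ (p' @ Node z ws # q') @ q)) ?U"
    by (rule contract_rootI[where pre="p @ p'" and y=z and vs=ws and post="q' @ q"])
      (use contract_stree[OF S1] i1 m2 seq in simp_all)
  moreover have "contract C (Node x (p @ Node (pcomp C y ?j' z) (p' @ ws @ q') # q)) ?U"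
    by (rule contract_rootI[where pre=p and y="pcomp C y ?j' z" and vs="p' @ ws @ q'" and post=q])
      (use contract_stree[OF S2] o m1 in simp_all)
  ultimately show ?thesis by blast
qed

lemma contract_root_grandchild_join:
  assumes st: "stree C (Node x (p @ Node y (p' @ v # q') # q))"
    and m: "outc C y = inc C x (Suc (length p))" and v: "contract C v v'"
  shows "\<exists>U. contract C (Node (pcomp C x (Suc (length p)) y) (p @ (p' @ v # q') @ q)) U \<and>
             contract C (Node x (p @ Node y (p' @ v' # q') # q)) U"
proof -
  let ?U = "Node (pcomp C x (Suc (length p)) y) (p @ p' @ v' # q' @ q)"
  have S2: "contract C (Node x (p @ Node y (p' @ v # q') # q)) (Node x (p @ Node y (p' @ v' # q') # q))"
    by (rule contract.child[OF st]) (rule contract.child[OF _ v], use st in auto)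
  have "contract C (Node (pcomp C x (Suc (length p)) y) (p @ (p' @ v # q') @ q)) ?U"
    by (rule contract_childI[where pre="p @ p'" and t=v and post="q' @ q"])
      (use contract_stree[OF contract.root[OF st m]] v in simp_all)
  moreover have "contract C (Node x (p @ Node y (p' @ v' # q') # q)) ?U"
    by (rule contract_rootI[where pre=p and y=y and vs="p' @ v' # q'" and post=q])
      (use contract_stree[OF S2] m in simp_all)
  ultimately show ?thesis by blast
qed

lemma contract_root_later_child_join:
  assumes st: "stree C (Node x (p @ Node y vs # m @ t # q))"
    and col: "outc C y = inc C x (Suc (length p))" and t: "contract C t t'"
  shows "\<exists>U. contract C (Node (pcomp C x (Suc (length p)) y) (p @ vs @ m @ t # q)) U \<and>
             contract C (Node x (p @ Node y vs # m @ t' # q)) U"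
proof -
  have S2: "contract C (Node x (p @ Node y vs # m @ t # q)) (Node x (p @ Node y vs # m @ t' # q))"
    using contract_childI[OF _ st t, of x "p @ Node y vs # m"] by simp
  have "contract C (Node (pcomp C x (Suc (length p)) y) (p @ vs @ m @ t # q))
      (Node (pcomp C x (Suc (length p)) y) (p @ vs @ m @ t' # q))"
    by (rule contract_childI[where pre="p @ vs @ m" and t=t and post=q])
      (use contract_stree[OF contract_rootI[OF HOL.refl st col HOL.refl]] t in simp_all)
  moreover have "contract C (Node x (p @ Node y vs # m @ t' # q))
      (Node (pcomp C x (Suc (length p)) y) (p @ vs @ m @ t' # q))"
    by (rule contract_rootI[where pre=p and y=y and vs=vs and post="m @ t' # q"])
      (use contract_stree[OF S2] col in simp_all)
  ultimately show ?thesis by blast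
qed

lemma contract_root_earlier_child_join:
  assumes st: "stree C (Node x (p @ t # m @ Node y vs # q))"
    and col: "outc C y = inc C x (Suc (Suc (length p + length m)))" and t: "contract C t t'"
  shows "\<exists>U. contract C (Node (pcomp C x (Suc (Suc (length p + length m))) y) (p @ t # m @ vs @ q)) U \<and>
             contract C (Node x (p @ t' # m @ Node y vs # q)) U"
proof -
  let ?z = "pcomp C x (Suc (Suc (length p + length m))) y"
  have S1: "contract C (Node x (p @ t # m @ Node y vs # q)) (Node ?z (p @ t # m @ vs @ q))"
    using contract_rootI[OF _ st, of x "p @ t # m" y vs q] col by simp
  have S2: "contract C (Node x (p @ t # m @ Node y vs # q)) (Node x (p @ t' # m @ Node y vs # q))"
    by (rule contract.child[OF st t])
  have "contract C (Node ?z (p @ t # m @ vs @ q)) (Node ?z (p @ t' # m @ vs @ q))"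
    by (rule contract.child) (use contract_stree[OF S1] t in simp_all)
  moreover have "contract C (Node x (p @ t' # m @ Node y vs # q)) (Node ?z (p @ t' # m @ vs @ q))"
    by (rule contract_rootI[where pre="p @ t' # m" and y=y and vs=vs and post=q])
      (use contract_stree[OF S2] col in simp_all)
  ultimately show ?thesis by blast
qed

lemma contract_distinct_children_join:
  assumes st: "stree C (Node x (p @ t # m @ u # q))" and t: "contract C t t'" and u: "contract C u u'"
  shows "\<exists>U. contract C (Node x (p @ t' # m @ u # q)) U \<and> contract C (Node x (p @ t # m @ u' # q)) U"
proof -
  have S1: "contract C (Node x (p @ t # m @ u # q)) (Node x (p @ t' # m @ u # q))"
    by (rule contract.child[OF st t])
  have S2: "contract C (Node x (p @ t # m @ u # q)) (Node x (p @ t # m @ u' # q))"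
    using contract_childI[OF _ st u, of x "p @ t # m"] by simp
  have "contract C (Node x (p @ t' # m @ u # q)) (Node x (p @ t' # m @ u' # q))"
    by (rule contract_childI[where pre="p @ t' # m" and t=u and post=q])
      (use contract_stree[OF S1] u in simp_all)
  moreover have "contract C (Node x (p @ t # m @ u' # q)) (Node x (p @ t' # m @ u' # q))"
    by (rule contract.child) (use contract_stree[OF S2] t in simp_all)
  ultimately show ?thesis by blast
qed

lemma contract_root_same_child_join:
  assumes st: "stree C (Node x (p @ Node y vs # q))" and col: "outc C y = inc C x (Suc (length p))"
    and t: "contract C (Node y vs) t'"
  shows "\<exists>U. contract C (Node (pcomp C x (Suc (length p)) y) (p @ vs @ q)) U \<and>
             contract C (Node x (p @ t' # q)) U"
  using t
proof cases
  case (root p' z ws q')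
  then show ?thesis using contract_nested_roots_join[of x p y p' z ws q' q] st col by simp
next
  case (child p' v q' v')
  then show ?thesis using contract_root_grandchild_join[of x p y p' v q' q v'] st col by simp
qed

lemma contract_root_join:
  assumes S: "contract C (Node x (p @ Node y vs # q)) T" and col: "outc C y = inc C x (Suc (length p))"
  shows "\<exists>U. (contract C)\<^sup>*\<^sup>* (Node (pcomp C x (Suc (length p)) y) (p @ vs @ q)) U \<and>
             (contract C)\<^sup>*\<^sup>* T U"
proof -
  have st: "stree C (Node x (p @ Node y vs # q))" using contract_stree[OF S] by simp
  from S show ?thesis
  proof cases
    case (root p2 y2 vs2 q2)
    from root(1) show ?thesis
    proof (cases rule: append_Cons_eq_append_Cons_cases)
      case (2 m)
      then show ?thesis using contract_parallel_roots_join[of x p y vs m y2 vs2 q2] st col root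
        by (auto intro: r_into_rtranclp)
    next
      case (3 m)
      then show ?thesis using contract_parallel_roots_join[of x p2 y2 vs2 m y vs q] st col root
        by (auto intro: r_into_rtranclp)
    qed (use root in auto)
  next
    case (child p2 t q2 t')
    from child(1) show ?thesis
    proof (cases rule: append_Cons_eq_append_Cons_cases)
      case 1
      then show ?thesis using contract_root_same_child_join[of x p y vs q t'] st col child
        by (auto intro: r_into_rtranclp)
    next
      case (2 m)
      then show ?thesis using contract_root_later_child_join[of x p y vs m t q2 t'] st col child
        by (auto intro: r_into_rtranclp)
    next
      case (3 m)
      then show ?thesis using contract_root_earlier_child_join[of x p2 t m y vs q t'] st col child
        by (auto intro: r_into_rtranclp)
    qed
  qed
qed

lemma contract_locally_confluent:
  "contract C S T1 \<Longrightarrow> contract C S T2 \<Longrightarrow> \<exists>U. (contract C)\<^sup>*\<^sup>* T1 U \<and> (contract C)\<^sup>*\<^sup>* T2 U"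
proof (induction arbitrary: T2 rule: contract.induct)
  case (root x pre y vs post)
  then show ?case using contract_root_join by blast
next
  case (child x p1 t q1 t1)
  note t_to_t1 = child(2) and IH = child.IH
  have st1: "stree C (Node x (p1 @ t1 # q1))"
    using contract_stree[OF contract.child[OF child(1,2)]] by simp
  from child.prems show ?case
  proof cases
    case (root p2 y vs q2)
    then show ?thesis
      using contract_root_join[of x p2 y vs q2 "Node x (p1 @ t1 # q1)"] contract.child[OF child(1,2)]
      by auto
  next
    case (child p2 t2 q2 t2')
    have st2: "stree C T2" using contract_stree[OF \<open>contract C _ T2\<close>] by simp
    from child(1) show ?thesis
    proof (cases rule: append_Cons_eq_append_Cons_cases)
      case 1
      then obtain U where "(contract C)\<^sup>*\<^sup>* t1 U" "(contract C)\<^sup>*\<^sup>* t2' U"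
        using IH child by blast
      then show ?thesis using rtranclp_contract_child[of _ U x p1 q1] st1 st2 child 1 by auto
    next
      case (2 m)
      then show ?thesis using contract_distinct_children_join[of x p1 t m t2 q2 t1 t2'] child t_to_t1
        by (auto intro: r_into_rtranclp)
    next
      case (3 m)
      then show ?thesis using contract_distinct_children_join[of x p2 t2 m t q1 t2' t1] child t_to_t1
        by (auto intro: r_into_rtranclp)
    qed
  qed
qed

sublocale newman "contract C" node_count
  by unfold_locales (use contract_node_count contract_locally_confluent in blast)+

lemma anticol_imp_normal: "anticol C S \<Longrightarrow> normal S"
proof -
  have "contract C S T \<Longrightarrow> anticol C S \<Longrightarrow> False" for T
  proof (induction rule: contract.induct)
    case (root x pre y vs post)
    then show ?case using anticol_Node_colourD[OF root.prems, of "length pre" y vs] by simp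
  qed auto
  then show "anticol C S \<Longrightarrow> normal S" unfolding normal_def by blast
qed

lemma normal_imp_anticol: "stree C S \<Longrightarrow> normal S \<Longrightarrow> anticol C S"
proof (induction S)
  case (Node x ts)
  have "anticol C t" if t: "t \<in> set ts" for t
  proof -
    obtain a b where ab: "ts = a @ t # b" using split_list[OF t] by blast
    have "\<not> contract C t t'" for t'
      using contract.child[of C x a t b t'] Node.prems ab unfolding normal_def by auto
    then have "normal t" unfolding normal_def by blast
    then show ?thesis using Node.IH[OF t] Node.prems(1) t by auto
  qed
  moreover have "inc C x (j + 1) \<noteq> outc C y" if "j < length ts" "ts ! j = Node y us" for j y us
  proof
    assume col: "inc C x (j + 1) = outc C y"
    have "ts = take j ts @ Node y us # drop (Suc j) ts" using that id_take_nth_drop by metis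
    then have "contract C (Node x ts) (Node (pcomp C x (Suc j) y) (take j ts @ us @ drop (Suc j) ts))"
      using contract.root[of C x "take j ts" y us "drop (Suc j) ts"] Node.prems(1) col that by simp
    then show False using Node.prems(2) unfolding normal_def by blast
  qed
  ultimately show ?case using Node.prems(1) by auto
qed simp

subsection \<open>Normal forms and the enveloping congruence\<close>

lemma contract_graft_corollas:
  assumes "x \<in> elems C" "2 \<le> arity C x" "y \<in> elems C" "2 \<le> arity C y" "i \<in> {1..arity C x}"
    "outc C y = inc C x i"
  shows "contract C (graft (corolla C x) i (corolla C y)) (corolla C (pcomp C x i y))"
proof -
  let ?a = "replicate (i - 1) Leaf" and ?b = "replicate (arity C x - i) Leaf"
  have "corolla C x = Node x (?a @ Leaf # ?b)"
    unfolding corolla_def using assms(5) by (simp add: replicate_add[symmetric] flip: replicate_Suc)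
  then have g: "graft (corolla C x) i (corolla C y) = Node x (?a @ corolla C y # ?b)"
    using graft_Node_Leaf_child[of x ?a ?b "corolla C y"] assms(5) by (simp add: sum_list_replicate)
  have "corolla C (pcomp C x i y) = Node (pcomp C x i y) (?a @ replicate (arity C y) Leaf @ ?b)"
    unfolding corolla_def arity_pcomp[OF assms(1,3,5,6)] using assms(4,5)
    by (simp add: replicate_add[symmetric])
  then show ?thesis unfolding g
    by (intro contract_rootI[where vs="replicate (arity C y) Leaf"])
      (use assms in \<open>auto simp: corolla_def\<close>)
qed

lemma env_eq_stree: "env_eq C S T \<Longrightarrow> stree C S \<and> stree C T \<and> nlv S = nlv T"
proof (induction rule: env_eq.induct)
  case (gen x y i)
  then show ?case using contract_stree[OF contract_graft_corollas[of x y i]] by simp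
next
  case (cong S S' T T' i)
  then show ?case
    using stree_graft[of C S T i] stree_graft[of C S' T' i] nlv_graft[of i S T] nlv_graft[of i S' T']
    by auto
qed auto

lemma env_eq_contract_root_corollas:
  assumes st: "stree C (Node x (replicate a Leaf @ Node y (replicate b Leaf) # replicate c Leaf))"
    and col: "outc C y = inc C x (Suc a)"
  shows "env_eq C (Node x (replicate a Leaf @ Node y (replicate b Leaf) # replicate c Leaf))
    (Node (pcomp C x (Suc a) y) (replicate a Leaf @ replicate b Leaf @ replicate c Leaf))"
proof -
  have s: "x \<in> elems C" "y \<in> elems C" "2 \<le> arity C x" "2 \<le> arity C y" "arity C y = b"
    "arity C x = Suc (a + c)"
    using st by auto
  have gen: "env_eq C (graft (corolla C x) (Suc a) (corolla C y)) (corolla C (pcomp C x (Suc a) y))"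
    by (rule env_eq.gen) (use s col in auto)
  have "corolla C x = Node x (replicate a Leaf @ Leaf # replicate c Leaf)"
    unfolding corolla_def s(6) replicate_Suc_add ..
  then have graft_eq: "graft (corolla C x) (Suc a) (corolla C y) =
      Node x (replicate a Leaf @ Node y (replicate b Leaf) # replicate c Leaf)"
    using graft_Node_Leaf_child[of x "replicate a Leaf" "replicate c Leaf" "corolla C y"] s(5)
    by (simp only: nlvs_replicate_Leaf corolla_def)
  have "arity C (pcomp C x (Suc a) y) = a + b + c"
    using arity_pcomp[of x y "Suc a"] s col by simp
  then have "corolla C (pcomp C x (Suc a) y) =
      Node (pcomp C x (Suc a) y) (replicate a Leaf @ replicate b Leaf @ replicate c Leaf)"
    unfolding corolla_def by (simp add: replicate_add)
  with gen graft_eq show ?thesis by simp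
qed

text \<open>Replacing the non-leaf children and grandchildren by leaves one at a time reduces a root
  contraction to the generating relation between corollas; the congruence rule grafts them back.\<close>

lemma env_eq_contract_root:
  "stree C (Node x (pre @ Node y vs # post)) \<Longrightarrow> outc C y = inc C x (Suc (length pre)) \<Longrightarrow>
   env_eq C (Node x (pre @ Node y vs # post)) (Node (pcomp C x (Suc (length pre)) y) (pre @ vs @ post))"
proof (induction "length (filter (\<lambda>t. t \<noteq> Leaf) (pre @ vs @ post))" arbitrary: pre vs post
    rule: less_induct)
  case less
  let ?z = "pcomp C x (Suc (length pre)) y"
  show ?case
  proof (cases "\<exists>t\<in>set (pre @ vs @ post). t \<noteq> Leaf")
    case False
    then have "pre = replicate (length pre) Leaf" "vs = replicate (length vs) Leaf"
      "post = replicate (length post) Leaf"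
      by (auto intro!: replicate_length_same[symmetric])
    then show ?thesis
      using env_eq_contract_root_corollas[of x "length pre" y "length vs" "length post"] less.prems
      by (metis length_replicate)
  next
    case True
    then obtain t where t: "t \<in> set (pre @ vs @ post)" "t \<noteq> Leaf" by blast
    have "stree C t" using t less.prems(1) by auto
    from t consider (pre) a b where "pre = a @ t # b" | (vs) a b where "vs = a @ t # b"
      | (post) a b where "post = a @ t # b"
      by (auto dest: split_list)
    then show ?thesis
    proof cases
      case pre
      then have "env_eq C (Node x ((a @ Leaf # b) @ Node y vs # post))
          (Node ?z ((a @ Leaf # b) @ vs @ post))"
        using less(1)[of "a @ Leaf # b" vs post] less.prems t by auto
      then show ?thesis
        using env_eq_fill_Leaf_child[of C x a "b @ Node y vs # post" ?z a "b @ vs @ post" t]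
          \<open>stree C t\<close> pre by simp
    next
      case vs
      then have "env_eq C (Node x (pre @ Node y (a @ Leaf # b) # post))
          (Node ?z (pre @ (a @ Leaf # b) @ post))"
        using less(1)[of pre "a @ Leaf # b" post] less.prems t by auto
      then show ?thesis
        using env_eq_fill_Leaf_grandchild[of C x pre y a b post ?z "pre @ a" "b @ post" t]
          \<open>stree C t\<close> vs by simp
    next
      case post
      then have "env_eq C (Node x (pre @ Node y vs # a @ Leaf # b)) (Node ?z (pre @ vs @ a @ Leaf # b))"
        using less(1)[of pre vs "a @ Leaf # b"] less.prems t by auto
      then show ?thesis
        using env_eq_fill_Leaf_child[of C x "pre @ Node y vs # a" b ?z "pre @ vs @ a" b t]
          \<open>stree C t\<close> post by simp
    qed
  qed
qed

lemma contract_imp_env_eq: "contract C S T \<Longrightarrow> env_eq C S T"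
proof (induction rule: contract.induct)
  case (root x pre y vs post)
  then show ?case by (rule env_eq_contract_root)
next
  case (child x pre t post t')
  have "stree C (Node x (pre @ Leaf # post))" using child(1) by auto
  then show ?case
    using env_eq.cong[OF env_eq.refl child(3), of "Node x (pre @ Leaf # post)" "Suc (nlvs pre)"]
      graft_Node_Leaf_child[of x pre post t] graft_Node_Leaf_child[of x pre post t'] by simp
qed

lemma rtranclp_contract_imp_env_eq: "(contract C)\<^sup>*\<^sup>* S T \<Longrightarrow> stree C S \<Longrightarrow> env_eq C S T"
  by (induction rule: rtranclp_induct) (auto intro: env_eq.refl env_eq.trans contract_imp_env_eq)

lemma contract_root_graft:
  assumes st: "stree C (Node x (pre @ Node y vs # post))"
    and col: "outc C y = inc C x (Suc (length pre))" and T: "stree C T"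
    and i: "1 \<le> i" "i \<le> nlv (Node x (pre @ Node y vs # post))"
  shows "contract C (graft (Node x (pre @ Node y vs # post)) i T)
           (graft (Node (pcomp C x (Suc (length pre)) y) (pre @ vs @ post)) i T)"
proof -
  let ?z = "pcomp C x (Suc (length pre)) y"
  have stg: "stree C (graft (Node x (pre @ Node y vs # post)) i T)"
    using stree_graft[OF st T i] .
  show ?thesis
  proof (cases rule: leaf_index_cases[where i=i and a="nlvs pre" and b="nlvs vs"])
    case 1
    then have eqs:
      "graft (Node x (pre @ Node y vs # post)) i T = Node x (graft_list pre i T @ Node y vs # post)"
      "graft (Node ?z (pre @ vs @ post)) i T = Node ?z (graft_list pre i T @ vs @ post)"
      using graft_list_append_before[of i pre "Node y vs # post" T]
        graft_list_append_before[of i pre "vs @ post" T] i(1) by simp_all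
    show ?thesis
      by (rule contract_rootI[where pre="graft_list pre i T" and y=y and vs=vs and post=post])
        (use eqs stg col in simp_all)
  next
    case (2 q)
    then have eqs:
      "graft (Node x (pre @ Node y vs # post)) i T = Node x (pre @ Node y (graft_list vs q T) # post)"
      "graft (Node ?z (pre @ vs @ post)) i T = Node ?z (pre @ graft_list vs q T @ post)"
      using graft_list_append_after[of q pre "Node y vs # post" T]
        graft_list_append_after[of q pre "vs @ post" T]
        graft_list_append_before[of q vs post T] by simp_all
    show ?thesis
      by (rule contract_rootI[where pre=pre and y=y and vs="graft_list vs q T" and post=post])
        (use eqs stg col in simp_all)
  next
    case (3 q)
    then have eqs:
      "graft (Node x (pre @ Node y vs # post)) i T = Node x (pre @ Node y vs # graft_list post q T)"
      "graft (Node ?z (pre @ vs @ post)) i T = Node ?z (pre @ vs @ graft_list post q T)"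
      using graft_list_append_after[of "nlvs vs + q" pre "Node y vs # post" T]
        graft_list_append_after[of q "pre @ vs" post T] by (simp_all add: add.assoc)
    show ?thesis
      by (rule contract_rootI[where pre=pre and y=y and vs=vs and post="graft_list post q T"])
        (use eqs stg col in simp_all)
  qed
qed

lemma contract_child_graft:
  assumes st: "stree C (Node x (pre @ t # post))" and t: "contract C t t'"
    and graft_t: "\<And>q. 1 \<le> q \<Longrightarrow> q \<le> nlv t \<Longrightarrow> contract C (graft t q T) (graft t' q T)"
    and T: "stree C T" and i: "1 \<le> i" "i \<le> nlv (Node x (pre @ t # post))"
  shows "contract C (graft (Node x (pre @ t # post)) i T) (graft (Node x (pre @ t' # post)) i T)"
proof -
  have nlv_t': "nlv t' = nlv t" using contract_stree[OF t] by simp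
  have stg: "stree C (graft (Node x (pre @ t # post)) i T)"
    using stree_graft[OF st T i] .
  show ?thesis
  proof (cases rule: leaf_index_cases[where i=i and a="nlvs pre" and b="nlv t"])
    case 1
    then have eqs: "graft (Node x (pre @ t # post)) i T = Node x (graft_list pre i T @ t # post)"
      "graft (Node x (pre @ t' # post)) i T = Node x (graft_list pre i T @ t' # post)"
      using graft_list_append_before[of i pre "t # post" T]
        graft_list_append_before[of i pre "t' # post" T]
        i(1) by simp_all
    show ?thesis
      by (rule contract_childI[where pre="graft_list pre i T" and t=t and post=post])
        (use eqs stg t in simp_all)
  next
    case (2 q)
    then have eqs: "graft (Node x (pre @ t # post)) i T = Node x (pre @ graft t q T # post)"
      "graft (Node x (pre @ t' # post)) i T = Node x (pre @ graft t' q T # post)"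
      using graft_Node_child[of "pre @ t # post" pre t post i q x T]
        graft_Node_child[of "pre @ t' # post" pre t' post i q x T] nlv_t' by simp_all
    show ?thesis
      by (rule contract_childI[where pre=pre and t="graft t q T" and post=post])
        (use eqs stg graft_t[OF 2(2,3)] in simp_all)
  next
    case (3 q)
    then have eqs: "graft (Node x (pre @ t # post)) i T = Node x (pre @ t # graft_list post q T)"
      "graft (Node x (pre @ t' # post)) i T = Node x (pre @ t' # graft_list post q T)"
      using graft_list_append_after[of "nlv t + q" pre "t # post" T]
        graft_list_append_after[of "nlv t' + q" pre "t' # post" T] nlv_t' by (simp_all add: add.assoc)
    show ?thesis
      by (rule contract_childI[where pre=pre and t=t and post="graft_list post q T"])
        (use eqs stg t in simp_all)
  qed
qed

lemma contract_graft_left: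
  "contract C S S' \<Longrightarrow> stree C T \<Longrightarrow> 1 \<le> i \<Longrightarrow> i \<le> nlv S \<Longrightarrow> contract C (graft S i T) (graft S' i T)"
proof (induction arbitrary: i rule: contract.induct)
  case (root x pre y vs post)
  then show ?case by (rule contract_root_graft)
next
  case (child x pre t post t')
  then show ?case using contract_child_graft[of x pre t post t'] by blast
qed

lemma contract_graft_right:
  "contract C T T' \<Longrightarrow> stree C S \<Longrightarrow> 1 \<le> i \<Longrightarrow> i \<le> nlv S \<Longrightarrow> contract C (graft S i T) (graft S i T')"
proof (induction S arbitrary: i)
  case (Node x ts)
  obtain pre t post q where d: "ts = pre @ t # post" "i = nlvs pre + q" "1 \<le> q" "q \<le> nlv t"
    using leaf_index_decompose[of i ts] Node.prems by auto
  have "stree C (graft (Node x ts) i T)"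
    using stree_graft[OF Node.prems(2)] contract_stree[OF Node.prems(1)] Node.prems(3,4) by blast
  moreover have "contract C (graft t q T) (graft t q T')" using Node d by auto
  ultimately show ?case
    unfolding graft_Node_child[OF d, of x T] graft_Node_child[OF d, of x T'] by (rule contract.child)
qed simp

lemma rtranclp_contract_graft_left:
  assumes "(contract C)\<^sup>*\<^sup>* S S'" "stree C S" "stree C T" "1 \<le> i" "i \<le> nlv S"
  shows "(contract C)\<^sup>*\<^sup>* (graft S i T) (graft S' i T)"
  using assms
proof (induction rule: rtranclp_induct)
  case (step U U')
  then have "contract C (graft U i T) (graft U' i T)"
    using contract_graft_left rtranclp_contract_stree by metis
  with step show ?case by (meson rtranclp.rtrancl_into_rtrancl)
qed simp

lemma rtranclp_contract_graft_right:
  assumes "(contract C)\<^sup>*\<^sup>* T T'" "stree C S" "1 \<le> i" "i \<le> nlv S"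
  shows "(contract C)\<^sup>*\<^sup>* (graft S i T) (graft S i T')"
  using assms
proof (induction rule: rtranclp_induct)
  case (step U U')
  then show ?case by (meson contract_graft_right rtranclp.rtrancl_into_rtrancl)
qed simp

lemma stree_nf: "stree C S \<Longrightarrow> stree C (nf S)" and nlv_nf: "stree C S \<Longrightarrow> nlv (nf S) = nlv S"
  using rtranclp_contract_stree[OF rtranclp_nf] by blast+

lemma anticol_nf: "stree C S \<Longrightarrow> anticol C (nf S)"
  using normal_imp_anticol[OF stree_nf normal_nf] .

lemma nf_graft:
  assumes "stree C A" "stree C B" "1 \<le> i" "i \<le> nlv A"
  shows "nf (graft A i B) = nf (graft (nf A) i (nf B))"
proof -
  have "(contract C)\<^sup>*\<^sup>* (graft A i B) (graft (nf A) i B)"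
    using rtranclp_contract_graft_left[OF rtranclp_nf assms] .
  also have "(contract C)\<^sup>*\<^sup>* (graft (nf A) i B) (graft (nf A) i (nf B))"
    using rtranclp_contract_graft_right[OF rtranclp_nf stree_nf] assms nlv_nf by simp
  finally show ?thesis by (rule nf_rtranclp_eq)
qed

lemma env_eq_imp_nf_eq: "env_eq C S T \<Longrightarrow> nf S = nf T"
proof (induction rule: env_eq.induct)
  case (gen x y i)
  then show ?case using contract_graft_corollas[of x y i] nf_rtranclp_eq by blast
next
  case (cong S S' T T' i)
  then show ?case using nf_graft[of S T i] nf_graft[of S' T' i] env_eq_stree[OF cong(1)]
      env_eq_stree[OF cong(2)] by auto
qed auto

lemma env_eq_nf: "stree C S \<Longrightarrow> env_eq C S (nf S)"
  by (rule rtranclp_contract_imp_env_eq[OF rtranclp_nf])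

lemma nf_anticol: "anticol C T \<Longrightarrow> nf T = T"
  by (rule nf_normal[OF anticol_imp_normal])

lemma nf_eq_iff_env_eq: "stree C S \<Longrightarrow> stree C T \<Longrightarrow> nf S = nf T \<longleftrightarrow> env_eq C S T"
  using env_eq_nf env_eq_imp_nf_eq env_eq.sym env_eq.trans by metis

subsection \<open>Grafting normal forms\<close>

lemma anticol_children_pcomp:
  assumes "x \<in> elems C" "y \<in> elems C" "arity C x = Suc (length p + length post)" "arity C y = length us"
    "outc C y = inc C x (Suc (length p))" "anticol_children C x 1 p" "anticol_children C y 1 us"
    "anticol_children C x (Suc (Suc (length p))) post"
  shows "anticol_children C (pcomp C x (Suc (length p)) y) 1 (p @ us @ post)"
proof -
  let ?z = "pcomp C x (Suc (length p)) y"
  have "anticol_children C ?z 1 p = anticol_children C x 1 p"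
    by (rule anticol_children_cong) (use inc_pcomp[of x y "Suc (length p)"] assms in auto)
  moreover have "anticol_children C ?z (1 + length p) us = anticol_children C y 1 us"
    by (rule anticol_children_cong) (use inc_pcomp[of x y "Suc (length p)"] assms in auto)
  moreover have "anticol_children C ?z (1 + length p + length us) post =
      anticol_children C x (Suc (Suc (length p))) post"
    by (rule anticol_children_cong) (use inc_pcomp[of x y "Suc (length p)"] assms in auto)
  ultimately show ?thesis using assms by (simp add: anticol_children_append)
qed

lemma ac_comp_list_Leaf_child:
  assumes A: "anticol C (Node x (p @ Leaf # post))" and B: "anticol C B"
  defines "R \<equiv> ac_comp_list C x (Suc (length p)) p (Leaf # post) 1 B"
  shows "(contract C)\<^sup>*\<^sup>* (Node x (p @ B # post)) R \<and> anticol C R \<and>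
    (\<exists>z us. R = Node z us \<and> outc C z = outc C x)"
proof -
  let ?j = "Suc (length p)"
  have x: "x \<in> elems C" "2 \<le> arity C x" "arity C x = Suc (length p + length post)"
    "anticol_children C x 1 p" "anticol_children C x (Suc ?j) post"
    using A unfolding anticol_Node_iff by (auto simp: anticol_children_append)
  show ?thesis
  proof (cases B)
    case Leaf
    then show ?thesis using A unfolding R_def by simp
  next
    case (Node y us)
    have y: "y \<in> elems C" "2 \<le> arity C y" "arity C y = length us" "anticol_children C y 1 us"
      using B unfolding Node anticol_Node_iff by auto
    show ?thesis
    proof (cases "outc C y = inc C x ?j")
      case True
      let ?z = "pcomp C x ?j y"
      have R: "R = Node ?z (p @ us @ post)" unfolding R_def using Node True by simp
      have "contract C (Node x (p @ B # post)) R"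
        unfolding R Node by (rule contract.root) (use A B Node True anticol_stree in auto)
      moreover have "?z \<in> elems C" "arity C ?z = arity C x + arity C y - 1" "outc C ?z = outc C x"
        using pcomp_elems arity_pcomp outc_pcomp x y True by auto
      moreover have "anticol_children C ?z 1 (p @ us @ post)"
        by (rule anticol_children_pcomp) (use x y True in auto)
      ultimately show ?thesis unfolding R anticol_Node_iff using x y by auto
    next
      case False
      have R: "R = Node x (p @ B # post)" unfolding R_def using Node False by simp
      have "anticol_children C x 1 (p @ B # post)"
        using x B Node False by (simp add: anticol_children_append)
      then show ?thesis unfolding R anticol_Node_iff using x by auto
    qed
  qed
qed

text \<open>The last conjunct (the root keeps its output colour) is needed in the induction: it shows that
  the parent of the modified subtree still cannot absorb it.\<close>

lemma graft_rtranclp_ac_comp: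
  "anticol C A \<Longrightarrow> anticol C B \<Longrightarrow> 1 \<le> i \<Longrightarrow> i \<le> nlv A \<Longrightarrow>
   (contract C)\<^sup>*\<^sup>* (graft A i B) (ac_comp C A i B) \<and> anticol C (ac_comp C A i B) \<and>
   (\<forall>z us. A = Node z us \<longrightarrow> (\<exists>z' us'. ac_comp C A i B = Node z' us' \<and> outc C z' = outc C z))"
proof (induction A arbitrary: i)
  case (Node x ts)
  obtain p t post q where d: "ts = p @ t # post" "i = nlvs p + q" "1 \<le> q" "q \<le> nlv t"
    using leaf_index_decompose[of i ts] Node.prems by auto
  have x: "x \<in> elems C" "2 \<le> arity C x" "arity C x = Suc (length p + length post)"
    "anticol_children C x 1 p" "anticol C t"
    "\<forall>y us. t = Node y us \<longrightarrow> inc C x (Suc (length p)) \<noteq> outc C y"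
    "anticol_children C x (Suc (Suc (length p))) post"
    using Node.prems(1) d unfolding anticol_Node_iff by (auto simp: anticol_children_append)
  have graft_eq: "graft (Node x ts) i B = Node x (p @ graft t q B # post)"
    by (rule graft_Node_child[OF d])
  have ac_eq: "ac_comp C (Node x ts) i B = ac_comp_list C x (Suc (length p)) p (t # post) q B"
    using ac_comp_list_skip[where pre="[]" and rest="t # post"] d by simp
  show ?case
  proof (cases t)
    case Leaf
    then show ?thesis
      using ac_comp_list_Leaf_child[of x p post B] Node.prems d graft_eq ac_eq by auto
  next
    case (Node z vs)
    have ac_eq': "ac_comp C (Node x ts) i B = Node x (p @ ac_comp C t q B # post)"
      using ac_eq Node d by simp
    have IH: "(contract C)\<^sup>*\<^sup>* (graft t q B) (ac_comp C t q B)" "anticol C (ac_comp C t q B)"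
      "\<exists>z' us'. ac_comp C t q B = Node z' us' \<and> outc C z' = outc C z"
      using Node.IH[of t q] d x(5) Node.prems(2) Node by auto
    have "stree C (graft (Node x ts) i B)"
      using stree_graft anticol_stree Node.prems by blast
    then have "(contract C)\<^sup>*\<^sup>* (graft (Node x ts) i B) (ac_comp C (Node x ts) i B)"
      unfolding graft_eq ac_eq' by (rule rtranclp_contract_child[OF IH(1)])
    moreover have "anticol_children C x 1 (p @ ac_comp C t q B # post)"
      using x IH(2,3) Node by (auto simp: anticol_children_append)
    then have "anticol C (Node x (p @ ac_comp C t q B # post))"
      unfolding anticol_Node_iff using x by simp
    ultimately show ?thesis unfolding ac_eq' by blast
  qed
qed simp

lemma nf_graft_eq_ac_comp:
  assumes "stree C S" "stree C T" "i \<in> {1..nlv S}"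
  shows "nf (graft S i T) = ac_comp C (nf S) i (nf T)"
proof -
  have "(contract C)\<^sup>*\<^sup>* (graft (nf S) i (nf T)) (ac_comp C (nf S) i (nf T))"
    "anticol C (ac_comp C (nf S) i (nf T))"
    using graft_rtranclp_ac_comp[OF anticol_nf anticol_nf] assms nlv_nf by auto
  then show ?thesis using nf_graft assms nf_rtranclp_eq nf_anticol by auto
qed

definition env_to_ac :: "'a tree set \<Rightarrow> 'a tree" where
  "env_to_ac X = nf (SOME S. S \<in> X)"

lemma env_to_ac_env_class: "stree C S \<Longrightarrow> env_to_ac (env_class C S) = nf S"
proof -
  assume "stree C S"
  then have "S \<in> env_class C S" unfolding env_class_def by (simp add: env_eq.refl)
  then have "(SOME S'. S' \<in> env_class C S) \<in> env_class C S" by (rule someI)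
  then have "env_eq C S (SOME S'. S' \<in> env_class C S)" unfolding env_class_def by simp
  then show ?thesis unfolding env_to_ac_def by (simp add: env_eq_imp_nf_eq)
qed

lemma env_to_ac_mem_unique:
  assumes "X \<in> Env C"
  shows "env_to_ac X \<in> X" "T \<in> X \<Longrightarrow> anticol C T \<Longrightarrow> T = env_to_ac X"
proof -
  obtain S where S: "stree C S" "X = env_class C S" using assms unfolding Env_def by blast
  then show "env_to_ac X \<in> X" using env_to_ac_env_class env_eq_nf unfolding env_class_def by auto
  show "T = env_to_ac X" if "T \<in> X" "anticol C T"
    using that S env_to_ac_env_class env_eq_imp_nf_eq nf_anticol unfolding env_class_def by auto
qed

lemma bij_betw_env_to_ac: "bij_betw env_to_ac (Env C) (AC C)"
proof (rule bij_betw_imageI)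
  show "inj_on env_to_ac (Env C)"
  proof (rule inj_onI)
    fix X Y assume X: "X \<in> Env C" and Y: "Y \<in> Env C" and eq: "env_to_ac X = env_to_ac Y"
    obtain S where S: "stree C S" "X = env_class C S" using X unfolding Env_def by blast
    obtain T where T: "stree C T" "Y = env_class C T" using Y unfolding Env_def by blast
    have "env_eq C S T" using eq S T env_to_ac_env_class nf_eq_iff_env_eq by simp
    then show "X = Y" unfolding S T by (rule env_class_eqI)
  qed
  have "AC C \<subseteq> env_to_ac ` Env C"
    unfolding AC_def Env_def using env_to_ac_env_class anticol_stree nf_anticol
    by (auto intro!: image_eqI)
  then show "env_to_ac ` Env C = AC C"
    unfolding AC_def Env_def using env_to_ac_env_class anticol_nf by auto
qed

end

theorem proposition1p1:
  fixes k :: nat and C :: "'a col_operad"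
  assumes "coloured_operad k C"
  shows "\<exists>\<phi>. bij_betw \<phi> (Env C) (AC C) \<and>
           (\<forall>X\<in>Env C. \<phi> X \<in> X \<and> (\<forall>T\<in>X. anticol C T \<longrightarrow> T = \<phi> X)) \<and>
           \<phi> (env_class C Leaf) = Leaf \<and>
           (\<forall>S. stree C S \<longrightarrow> nlv (\<phi> (env_class C S)) = nlv S) \<and>
           (\<forall>S T i. stree C S \<longrightarrow> stree C T \<longrightarrow> i \<in> {1..nlv S} \<longrightarrow>
              \<phi> (env_class C (graft S i T)) =
                ac_comp C (\<phi> (env_class C S)) i (\<phi> (env_class C T)))"
proof -
  interpret colop k C by unfold_locales (rule assms)
  show ?thesis
  proof (intro exI conjI ballI allI impI)
    show "bij_betw env_to_ac (Env C) (AC C)" by (rule bij_betw_env_to_ac)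
    show "env_to_ac X \<in> X" "\<And>T. T \<in> X \<Longrightarrow> anticol C T \<Longrightarrow> T = env_to_ac X" if "X \<in> Env C" for X
      using env_to_ac_mem_unique[OF that] by auto
    show "env_to_ac (env_class C Leaf) = Leaf"
      using env_to_ac_env_class[of Leaf] nf_anticol[of Leaf] by simp
    show "nlv (env_to_ac (env_class C S)) = nlv S" if "stree C S" for S
      using that by (simp add: env_to_ac_env_class nlv_nf)
    show "env_to_ac (env_class C (graft S i T)) =
        ac_comp C (env_to_ac (env_class C S)) i (env_to_ac (env_class C T))"
      if "stree C S" "stree C T" "i \<in> {1..nlv S}" for S T i
      using that stree_graft[OF that(1,2)] by (simp add: env_to_ac_env_class nf_graft_eq_ac_comp)
  qed
qed
end
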